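(* Let $\gamma:[0,1]\to[0,1]^2$ be a continuous curve such that $\gamma(0)=(0,0)$, $\gamma(1)=(1,1)$, and $\gamma(t)\in\Delta$ for all $t\in(0,1)$. Then for each $n\in\mathbb{N}$ there exist distinct points $A_1,\ldots,A_{n+1}$ on $\gamma$ such that, setting $A_0=(0,0)$, $A_{n+2}=(1,1)$ and $A_{-1}=A_{n+1}-(1,1)$, $$\pi_2(\overrightarrow{A_iA_{i+1}})=\pi_1(\overrightarrow{A_{i-1}A_i}),\qquad i=0,\ldots,n+1.$$
   Context: $\pi_1(a,b)=a$ and $\pi_2(a,b)=b$ are the coordinate projections; $\overrightarrow{AB}=B-A$. $\Delta=\{(a,b)\in(0,1)^2: a>b\}$. *)

theory Defs
  imports "HOL-Analysis.Analysis"
begin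

definition Delta :: "(real \<times> real) set" where
  "Delta = {(a, b). 0 < a \<and> a < 1 \<and> 0 < b \<and> b < 1 \<and> a > b}"

end

theory Submission
  imports Defs
begin

text \<open>
  Write \<open>A\<^bsub>j+1\<^esub> = \<gamma> u\<^sub>j\<close> for unknown parameters \<open>u\<^sub>0, \<dots>, u\<^sub>n \<in> [0,1]\<close>. The required identities say
  that \<open>\<pi>\<^sub>2 A\<^bsub>k+1\<^esub> - \<pi>\<^sub>1 A\<^sub>k\<close> is one and the same constant \<open>c\<close> for \<open>k = -1, \<dots>, n+1\<close>; taking
  \<open>c = \<pi>\<^sub>2 A\<^sub>1\<close> this is the system of \<open>n + 1\<close> equations \<open>\<pi>\<^sub>1 A\<^bsub>n+1\<^esub> + c = 1\<close> and
  \<open>\<pi>\<^sub>2 A\<^bsub>j+1\<^esub> = \<pi>\<^sub>1 A\<^sub>j + c\<close> (\<open>1 \<le> j \<le> n\<close>). After truncating the right-hand sides at \<open>1\<close>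
  the system satisfies the sign conditions of the Poincare-Miranda theorem on the cube \<open>[0,1]\<^bsup>n+1\<^esup>\<close>,
  which follows from Kuhn's combinatorial lemma. Since \<open>\<gamma>\<close> runs inside \<open>\<Delta>\<close> between its
  endpoints, every solution has \<open>c > 0\<close>, the truncation is inactive, and the first coordinates
  of the points strictly increase, so the points are distinct.
\<close>

definition unit_cube :: "nat \<Rightarrow> (nat \<Rightarrow> real) set" where
  "unit_cube m = PiE {..<m} (\<lambda>_. {0..1})"

lemma compactin_unit_cube: "compactin (powertop_real {..<m}) (unit_cube m)"
  by (simp add: unit_cube_def compactin_PiE)

lemma kuhn_sign_change_cell:
  fixes G :: "nat \<Rightarrow> (nat \<Rightarrow> nat) \<Rightarrow> real" and p :: nat
  assumes "p > 0"
    and low: "\<And>i x. i < m \<Longrightarrow> \<forall>j<m. x j \<le> p \<Longrightarrow> x i = 0 \<Longrightarrow> G i x \<le> 0"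
    and up: "\<And>i x. i < m \<Longrightarrow> \<forall>j<m. x j \<le> p \<Longrightarrow> x i = p \<Longrightarrow> 0 \<le> G i x"
  obtains q where "\<forall>i<m. q i < p"
    and "\<And>i. i < m \<Longrightarrow> \<exists>r s. (\<forall>j<m. q j \<le> r j \<and> r j \<le> q j + 1) \<and> (\<forall>j<m. q j \<le> s j \<and> s j \<le> q j + 1)
           \<and> G i r \<le> 0 \<and> 0 \<le> G i s"
proof -
  define label where "label x i = (if x i = 0 then 0 else if x i = p then 1
      else if G i x \<le> 0 then 0 else (1::nat))" for x i
  have label_sign: "label x i = 0 \<and> G i x \<le> 0 \<or> label x i = 1 \<and> 0 \<le> G i x"
    if "\<forall>j<m. x j \<le> p" "i < m" for x i
    using low[OF that(2,1)] up[OF that(2,1)] \<open>p > 0\<close> by (auto simp: label_def)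
  obtain q where q_lt: "\<forall>i<m. q i < p" and q_cell: "\<forall>i<m. \<exists>r s.
      (\<forall>j<m. q j \<le> r j \<and> r j \<le> q j + 1) \<and> (\<forall>j<m. q j \<le> s j \<and> s j \<le> q j + 1) \<and> label r i \<noteq> label s i"
  proof (rule kuhn_lemma[of p m label])
    show "0 < p" by fact
    show "\<forall>x. (\<forall>i<m. x i \<le> p) \<longrightarrow> (\<forall>i<m. label x i = 0 \<or> label x i = 1)"
      by (simp add: label_def)
    show "\<forall>x. (\<forall>i<m. x i \<le> p) \<longrightarrow> (\<forall>i<m. x i = 0 \<longrightarrow> label x i = 0)"
      by (simp add: label_def)
    show "\<forall>x. (\<forall>i<m. x i \<le> p) \<longrightarrow> (\<forall>i<m. x i = p \<longrightarrow> label x i = 1)"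
      using \<open>p > 0\<close> by (simp add: label_def)
  qed
  have in_grid: "\<forall>j<m. r j \<le> p" if "\<forall>j<m. q j \<le> r j \<and> r j \<le> q j + 1" for r
    using that q_lt by (metis Suc_eq_plus1 Suc_leI order_trans)
  show ?thesis
  proof (rule that[OF q_lt])
    fix i
    assume "i < m"
    then obtain r s where r: "\<forall>j<m. q j \<le> r j \<and> r j \<le> q j + 1" and s: "\<forall>j<m. q j \<le> s j \<and> s j \<le> q j + 1"
      and "label r i \<noteq> label s i"
      using q_cell by blast
    then show "\<exists>r s. (\<forall>j<m. q j \<le> r j \<and> r j \<le> q j + 1) \<and> (\<forall>j<m. q j \<le> s j \<and> s j \<le> q j + 1)
        \<and> G i r \<le> 0 \<and> 0 \<le> G i s"
      using label_sign[OF in_grid[OF r] \<open>i < m\<close>] label_sign[OF in_grid[OF s] \<open>i < m\<close>] by metis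
  qed
qed

lemma kuhn_approximate_zero:
  fixes F :: "nat \<Rightarrow> (nat \<Rightarrow> real) \<Rightarrow> real"
  assumes unif: "\<And>e. e > 0 \<Longrightarrow> \<exists>\<delta>>0. \<forall>u\<in>unit_cube m. \<forall>v\<in>unit_cube m.
                   (\<forall>j<m. \<bar>u j - v j\<bar> < \<delta>) \<longrightarrow> (\<forall>i<m. \<bar>F i u - F i v\<bar> < e)"
    and low: "\<And>i u. i < m \<Longrightarrow> u \<in> unit_cube m \<Longrightarrow> u i = 0 \<Longrightarrow> F i u \<le> 0"
    and up: "\<And>i u. i < m \<Longrightarrow> u \<in> unit_cube m \<Longrightarrow> u i = 1 \<Longrightarrow> 0 \<le> F i u"
    and "e > 0"
  shows "\<exists>u\<in>unit_cube m. \<forall>i<m. \<bar>F i u\<bar> < e"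
proof -
  obtain \<delta> where "\<delta> > 0" and \<delta>: "\<And>u v i. u \<in> unit_cube m \<Longrightarrow> v \<in> unit_cube m \<Longrightarrow>
      \<forall>j<m. \<bar>u j - v j\<bar> < \<delta> \<Longrightarrow> i < m \<Longrightarrow> \<bar>F i u - F i v\<bar> < e"
    using unif[OF \<open>e > 0\<close>] by metis
  obtain p :: nat where "p > 0" and "inverse (real p) < \<delta>"
    using real_arch_inverse \<open>\<delta> > 0\<close> by blast
  define grid where "grid x = restrict (\<lambda>j. real (x j) / real p) {..<m}" for x :: "nat \<Rightarrow> nat"
  have grid_in: "grid x \<in> unit_cube m" if "\<forall>j<m. x j \<le> p" for x
    using that \<open>p > 0\<close> by (auto simp: grid_def unit_cube_def divide_le_eq_1)
  obtain q where q_lt: "\<forall>i<m. q i < p" and q_cell: "\<And>i. i < m \<Longrightarrow> \<exists>r s.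
      (\<forall>j<m. q j \<le> r j \<and> r j \<le> q j + 1) \<and> (\<forall>j<m. q j \<le> s j \<and> s j \<le> q j + 1)
      \<and> F i (grid r) \<le> 0 \<and> 0 \<le> F i (grid s)"
    by (rule kuhn_sign_change_cell[of p m "\<lambda>i x. F i (grid x)"])
      (use \<open>p > 0\<close> low up grid_in in \<open>auto simp: grid_def\<close>)
  have q_grid: "\<forall>j<m. q j \<le> p"
    using q_lt by (simp add: less_imp_le)
  have near_q: "\<bar>F i (grid r) - F i (grid q)\<bar> < e"
    if r: "\<forall>j<m. q j \<le> r j \<and> r j \<le> q j + 1" and "i < m" for r i
  proof -
    have "\<bar>grid r j - grid q j\<bar> < \<delta>" if "j < m" for j
    proof -
      have "grid r j - grid q j = (real (r j) - real (q j)) / real p"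
        using that by (simp add: grid_def diff_divide_distrib)
      moreover have "0 \<le> real (r j) - real (q j)" "real (r j) - real (q j) \<le> 1"
        using r that by auto
      ultimately have "\<bar>grid r j - grid q j\<bar> \<le> inverse (real p)"
        using \<open>p > 0\<close> by (simp add: divide_inverse divide_le_cancel)
      then show ?thesis
        using \<open>inverse (real p) < \<delta>\<close> by linarith
    qed
    moreover have "\<forall>j<m. r j \<le> p"
      using r q_lt by (metis Suc_eq_plus1 Suc_leI order_trans)
    ultimately show ?thesis
      using \<delta> grid_in q_grid \<open>i < m\<close> by blast
  qed
  have "\<bar>F i (grid q)\<bar> < e" if "i < m" for i
  proof -
    obtain r s where r: "\<forall>j<m. q j \<le> r j \<and> r j \<le> q j + 1" and s: "\<forall>j<m. q j \<le> s j \<and> s j \<le> q j + 1"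
      and "F i (grid r) \<le> 0" and "0 \<le> F i (grid s)"
      using q_cell[OF \<open>i < m\<close>] by blast
    then show ?thesis
      using near_q[OF r that] near_q[OF s that] by (simp add: abs_less_iff)
  qed
  then show ?thesis
    using grid_in[OF q_grid] by blast
qed

lemma poincare_miranda_unit_cube:
  fixes F :: "nat \<Rightarrow> (nat \<Rightarrow> real) \<Rightarrow> real"
  assumes cont: "\<And>i. i < m \<Longrightarrow> continuous_map (subtopology (powertop_real {..<m}) (unit_cube m)) euclideanreal (F i)"
    and unif: "\<And>e. e > 0 \<Longrightarrow> \<exists>\<delta>>0. \<forall>u\<in>unit_cube m. \<forall>v\<in>unit_cube m.
                 (\<forall>j<m. \<bar>u j - v j\<bar> < \<delta>) \<longrightarrow> (\<forall>i<m. \<bar>F i u - F i v\<bar> < e)"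
    and low: "\<And>i u. i < m \<Longrightarrow> u \<in> unit_cube m \<Longrightarrow> u i = 0 \<Longrightarrow> F i u \<le> 0"
    and up: "\<And>i u. i < m \<Longrightarrow> u \<in> unit_cube m \<Longrightarrow> u i = 1 \<Longrightarrow> 0 \<le> F i u"
  shows "\<exists>u\<in>unit_cube m. \<forall>i<m. F i u = 0"
proof -
  define \<Phi> where "\<Phi> = (\<lambda>u. \<Sum>i<m. \<bar>F i u\<bar>)"
  have "continuous_map (subtopology (powertop_real {..<m}) (unit_cube m)) euclideanreal \<Phi>"
    unfolding \<Phi>_def by (intro continuous_map_sum continuous_map_real_abs cont) auto
  then have "compactin euclideanreal (\<Phi> ` unit_cube m)"
    by (rule image_compactin[rotated]) (simp add: compactin_subtopology compactin_unit_cube)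
  moreover have "restrict (\<lambda>_. 0) {..<m} \<in> unit_cube m"
    by (simp add: unit_cube_def)
  ultimately obtain u0 where u0: "u0 \<in> unit_cube m" and min: "\<And>u. u \<in> unit_cube m \<Longrightarrow> \<Phi> u0 \<le> \<Phi> u"
    using compact_attains_inf[of "\<Phi> ` unit_cube m"] by (auto simp: compactin_euclidean_iff)
  have "\<Phi> u0 \<le> 0"
  proof (rule field_le_epsilon)
    fix e :: real
    assume "e > 0"
    then have "e / (real m + 1) > 0" by simp
    then obtain u where "u \<in> unit_cube m" and small: "\<forall>i<m. \<bar>F i u\<bar> < e / (real m + 1)"
      using kuhn_approximate_zero[OF unif low up] by blast
    have "\<Phi> u0 \<le> \<Phi> u"
      using min \<open>u \<in> unit_cube m\<close> .
    also have "\<dots> \<le> of_nat (card {..<m}) * (e / (real m + 1))"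
      unfolding \<Phi>_def by (rule sum_bounded_above) (use small in \<open>simp add: less_imp_le\<close>)
    also have "\<dots> \<le> 0 + e"
      using \<open>e > 0\<close> by (simp add: field_simps)
    finally show "\<Phi> u0 \<le> 0 + e" .
  qed
  then have "\<forall>i<m. F i u0 = 0"
    using sum_nonneg_eq_0_iff[of "{..<m}" "\<lambda>i. \<bar>F i u0\<bar>"] sum_abs_ge_zero[of "\<lambda>i. F i u0" "{..<m}"]
    by (simp add: \<Phi>_def)
  with u0 show ?thesis by blast
qed

lemma continuous_map_unit_cube_coordinate:
  fixes f :: "real \<Rightarrow> 'a::topological_space"
  assumes "continuous_on {0..1} f" and "k < m"
  shows "continuous_map (subtopology (powertop_real {..<m}) (unit_cube m)) euclidean (\<lambda>u. f (u k))"
proof -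
  have "continuous_map (subtopology (powertop_real {..<m}) (unit_cube m)) euclideanreal (\<lambda>u. u k)"
    using \<open>k < m\<close> by (intro continuous_map_from_subtopology continuous_map_product_projection) simp
  then have "continuous_map (subtopology (powertop_real {..<m}) (unit_cube m)) (top_of_set {0..1}) (\<lambda>u. u k)"
    using \<open>k < m\<close> by (auto simp: continuous_map_in_subtopology unit_cube_def PiE_iff)
  moreover have "continuous_map (top_of_set {0..1}) euclidean f"
    using assms(1) by simp
  ultimately have "continuous_map (subtopology (powertop_real {..<m}) (unit_cube m)) euclidean (f \<circ> (\<lambda>u. u k))"
    by (rule continuous_map_compose)
  then show ?thesis
    by (simp add: o_def)
qed

lemma abs_min_add_diff_le:
  "\<bar>min c (a + b) - min c (a' + b')\<bar> \<le> \<bar>a - a'\<bar> + \<bar>b - b'\<bar>" for a b c :: "'a::linordered_idom"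
  by (auto simp: min_def abs_le_iff abs_if)

lemma uniform_modulus_fst_snd:
  fixes \<gamma> :: "real \<Rightarrow> real \<times> real"
  assumes "continuous_on {0..1} \<gamma>" and "e > 0"
  obtains \<delta> where "\<delta> > 0" and "\<And>s t. s \<in> {0..1} \<Longrightarrow> t \<in> {0..1} \<Longrightarrow> \<bar>s - t\<bar> < \<delta> \<Longrightarrow>
      \<bar>fst (\<gamma> s) - fst (\<gamma> t)\<bar> < e \<and> \<bar>snd (\<gamma> s) - snd (\<gamma> t)\<bar> < e"
proof -
  obtain \<delta> where "\<delta> > 0"
    and \<delta>: "\<forall>t\<in>{0..1}. \<forall>s\<in>{0..1}. dist s t < \<delta> \<longrightarrow> dist (\<gamma> s) (\<gamma> t) < e"
    using compact_uniformly_continuous[OF assms(1) compact_Icc] \<open>e > 0\<close>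
    unfolding uniformly_continuous_on_def by blast
  have "\<bar>fst (\<gamma> s) - fst (\<gamma> t)\<bar> < e \<and> \<bar>snd (\<gamma> s) - snd (\<gamma> t)\<bar> < e"
    if "s \<in> {0..1}" "t \<in> {0..1}" "\<bar>s - t\<bar> < \<delta>" for s t
  proof -
    have "dist (\<gamma> s) (\<gamma> t) < e"
      using \<delta> that by (simp add: dist_real_def)
    then show ?thesis
      using dist_fst_le[of "\<gamma> s" "\<gamma> t"] dist_snd_le[of "\<gamma> s" "\<gamma> t"]
      unfolding dist_real_def by linarith
  qed
  with \<open>\<delta> > 0\<close> show ?thesis by (rule that)
qed

lemma staircase_system_solvable:
  fixes \<gamma> :: "real \<Rightarrow> real \<times> real" and n :: nat
  assumes cont: "continuous_on {0..1} \<gamma>" and into: "\<gamma> ` {0..1} \<subseteq> {0..1} \<times> {0..1}"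
    and start: "snd (\<gamma> 0) = 0" and stop: "snd (\<gamma> 1) = 1"
  shows "\<exists>u\<in>unit_cube (Suc n). fst (\<gamma> (u n)) + snd (\<gamma> (u 0)) = 1 \<and>
           (\<forall>i\<in>{1..n}. snd (\<gamma> (u i)) = min 1 (fst (\<gamma> (u (i - 1))) + snd (\<gamma> (u 0))))"
proof -
  define X where "X t = fst (\<gamma> t)" for t
  define Y where "Y t = snd (\<gamma> t)" for t
  have X_range: "0 \<le> X t \<and> X t \<le> 1" and Y_range: "0 \<le> Y t \<and> Y t \<le> 1" if "t \<in> {0..1}" for t
  proof -
    have "\<gamma> t \<in> {0..1} \<times> {0..1}"
      using into that by blast
    then show "0 \<le> X t \<and> X t \<le> 1" "0 \<le> Y t \<and> Y t \<le> 1"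
      by (auto simp: X_def Y_def mem_Times_iff)
  qed
  have in_range: "u j \<in> {0..1}" if "u \<in> unit_cube (Suc n)" "j \<le> n" for u j
    using that by (simp add: unit_cube_def PiE_iff)
  \<comment> \<open>the truncation \<open>min 1\<close> makes \<open>F i\<close> nonnegative on the face \<open>u i = 1\<close>\<close>
  define F where "F i u = (if i = 0 then X (u n) + Y (u 0) - 1
      else Y (u i) - min 1 (X (u (i - 1)) + Y (u 0)))" for i and u :: "nat \<Rightarrow> real"
  have "\<exists>u\<in>unit_cube (Suc n). \<forall>i<Suc n. F i u = 0"
  proof (rule poincare_miranda_unit_cube)
    have "continuous_on {0..1} X" "continuous_on {0..1} Y"
      unfolding X_def Y_def by (intro continuous_intros cont)+
    note coord = continuous_map_unit_cube_coordinate[OF this(1)] continuous_map_unit_cube_coordinate[OF this(2)]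
    show "continuous_map (subtopology (powertop_real {..<Suc n}) (unit_cube (Suc n))) euclideanreal (F i)"
      if "i < Suc n" for i
      using that unfolding F_def
      by (cases "i = 0") (auto intro!: continuous_map_diff continuous_map_add continuous_map_real_min coord)
  next
    fix e :: real
    assume "e > 0"
    then obtain \<delta> where "\<delta> > 0" and XY_close: "\<And>s t. s \<in> {0..1} \<Longrightarrow> t \<in> {0..1} \<Longrightarrow> \<bar>s - t\<bar> < \<delta> \<Longrightarrow>
        \<bar>X s - X t\<bar> < e / 3 \<and> \<bar>Y s - Y t\<bar> < e / 3"
      using uniform_modulus_fst_snd[OF cont, of "e / 3"] unfolding X_def Y_def by auto
    show "\<exists>\<delta>>0. \<forall>u\<in>unit_cube (Suc n). \<forall>v\<in>unit_cube (Suc n).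
            (\<forall>j<Suc n. \<bar>u j - v j\<bar> < \<delta>) \<longrightarrow> (\<forall>i<Suc n. \<bar>F i u - F i v\<bar> < e)"
    proof (intro exI[of _ \<delta>] conjI ballI impI allI)
      fix u v i
      assume u: "u \<in> unit_cube (Suc n)" and v: "v \<in> unit_cube (Suc n)"
        and uv: "\<forall>j<Suc n. \<bar>u j - v j\<bar> < \<delta>" and "i < Suc n"
      have close: "\<bar>X (u j) - X (v j)\<bar> < e / 3 \<and> \<bar>Y (u j) - Y (v j)\<bar> < e / 3" if "j \<le> n" for j
        using XY_close in_range[OF u that] in_range[OF v that] uv that by simp
      show "\<bar>F i u - F i v\<bar> < e"
      proof (cases "i = 0")
        case True
        then show ?thesis
          using close[of 0, unfolded abs_less_iff] close[of n, unfolded abs_less_iff]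
          by (simp add: F_def abs_less_iff)
      next
        case False
        have "i - 1 \<le> n"
          using \<open>i < Suc n\<close> by simp
        then show ?thesis
          using False close[of 0] close[OF \<open>i - 1 \<le> n\<close>] close[of i, unfolded abs_less_iff] \<open>i < Suc n\<close>
            abs_min_add_diff_le[of 1 "X (u (i - 1))" "Y (u 0)" "X (v (i - 1))" "Y (v 0)", unfolded abs_le_iff]
          by (simp add: F_def abs_less_iff)
      qed
    qed (fact \<open>\<delta> > 0\<close>)
  next
    fix i u
    assume "i < Suc n" "u \<in> unit_cube (Suc n)"
    then show "u i = 0 \<Longrightarrow> F i u \<le> 0" and "u i = 1 \<Longrightarrow> 0 \<le> F i u"
      using X_range[OF in_range] Y_range[OF in_range] start stop
      by (auto simp: F_def X_def Y_def)
  qed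
  then obtain u where "u \<in> unit_cube (Suc n)" and zero: "\<And>i. i < Suc n \<Longrightarrow> F i u = 0"
    by blast
  have "X (u n) + Y (u 0) = 1"
    using zero[of 0] by (simp add: F_def)
  moreover have "Y (u i) = min 1 (X (u (i - 1)) + Y (u 0))" if "i \<in> {1..n}" for i
    using zero[of i] that by (simp add: F_def)
  ultimately show ?thesis
    using \<open>u \<in> unit_cube (Suc n)\<close> unfolding X_def Y_def by blast
qed

text \<open>\<open>extend_chain n P k\<close> is the paper's \<open>A\<^sub>k\<close>, \<open>-1 \<le> k \<le> n + 2\<close>, with \<open>A\<^bsub>j+1\<^esub> = P j\<close>.\<close>

definition extend_chain :: "nat \<Rightarrow> (nat \<Rightarrow> real \<times> real) \<Rightarrow> int \<Rightarrow> real \<times> real" where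
  "extend_chain n P k = (if k = 0 then (0, 0) else if k = int n + 2 then (1, 1)
     else if k = -1 then P n - (1, 1) else P (nat (k - 1)))"

lemma extend_chain_inner: "k \<in> {1..int n + 1} \<Longrightarrow> extend_chain n P k = P (nat (k - 1))"
  by (simp add: extend_chain_def)

lemma inj_on_extend_chain:
  assumes "inj_on P {..n}"
  shows "inj_on (extend_chain n P) {1..int n + 1}"
proof (rule inj_onI)
  fix k l
  assume k: "k \<in> {1..int n + 1}" and l: "l \<in> {1..int n + 1}"
    and "extend_chain n P k = extend_chain n P l"
  then have "P (nat (k - 1)) = P (nat (l - 1))"
    by (simp add: extend_chain_inner)
  moreover have "nat (k - 1) \<in> {..n}" and "nat (l - 1) \<in> {..n}"
    using k l by auto
  ultimately have "nat (k - 1) = nat (l - 1)"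
    using assms by (simp add: inj_on_eq_iff)
  then show "k = l"
    using k l by (simp add: eq_nat_nat_iff)
qed

locale truncated_staircase =
  fixes n :: nat and P :: "nat \<Rightarrow> real \<times> real"
  assumes points: "\<And>j. j \<le> n \<Longrightarrow> P j \<in> insert (0, 0) (insert (1, 1) Delta)"
    and closes: "fst (P n) + snd (P 0) = 1"
    and steps: "\<And>i. i \<in> {1..n} \<Longrightarrow> snd (P i) = min 1 (fst (P (i - 1)) + snd (P 0))"
begin

lemma point_bounds:
  assumes "j \<le> n"
  shows "0 \<le> snd (P j)" and "snd (P j) \<le> fst (P j)" and "fst (P j) \<le> 1"
  using points[OF assms] by (auto simp: Delta_def)

lemma point_snd_eq_0: "j \<le> n \<Longrightarrow> snd (P j) = 0 \<Longrightarrow> fst (P j) = 0"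
  using points[of j] by (cases "P j") (auto simp: Delta_def)

lemma point_snd_eq_1: "j \<le> n \<Longrightarrow> snd (P j) = 1 \<Longrightarrow> fst (P j) = 1"
  using points[of j] by (cases "P j") (auto simp: Delta_def)

lemma fst_mono:
  assumes "i \<le> j" and "j \<le> n"
  shows "fst (P i) \<le> fst (P j)"
proof (rule lift_Suc_mono_le_ivl[of "{..<n}"])
  fix k
  assume "k \<in> {..<n}"
  then have "fst (P k) \<le> min 1 (fst (P k) + snd (P 0))"
    using point_bounds[of k] point_bounds[of 0] by simp
  also have "\<dots> = snd (P (Suc k))"
    using steps[of "Suc k"] \<open>k \<in> {..<n}\<close> by simp
  also have "\<dots> \<le> fst (P (Suc k))"
    using point_bounds[of "Suc k"] \<open>k \<in> {..<n}\<close> by simp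
  finally show "fst (P k) \<le> fst (P (Suc k))" .
qed (use assms in auto)

lemma height_pos: "0 < snd (P 0)"
proof (rule ccontr)
  assume "\<not> 0 < snd (P 0)"
  then have height: "snd (P 0) = 0"
    using point_bounds[of 0] by simp
  have "fst (P j) = 0" if "j \<le> n" for j
    using that
  proof (induction j)
    case 0
    then show ?case using point_snd_eq_0 height by simp
  next
    case (Suc j)
    then have "snd (P (Suc j)) = 0"
      using steps[of "Suc j"] height by simp
    then show ?case using point_snd_eq_0 Suc.prems by blast
  qed
  then show False
    using closes height by simp
qed

lemma steps_untruncated:
  assumes "i \<in> {1..n}"
  shows "snd (P i) = fst (P (i - 1)) + snd (P 0)"
proof -
  have "fst (P (i - 1)) + snd (P 0) < 1"
  proof (rule ccontr)
    assume "\<not> fst (P (i - 1)) + snd (P 0) < 1"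
    then have "snd (P i) = 1"
      using steps[OF assms] by simp
    then have "fst (P i) = 1"
      using point_snd_eq_1 assms by simp
    then have "fst (P n) = 1"
      using fst_mono[of i n] point_bounds[of n] assms by simp
    then show False
      using closes height_pos by simp
  qed
  then show ?thesis
    using steps[OF assms] by simp
qed

lemma inj_on_points: "inj_on P {..n}"
proof -
  have "fst (P k) < fst (P (Suc k))" if "k \<in> {..<n}" for k
    using steps_untruncated[of "Suc k"] point_bounds[of "Suc k"] height_pos that by simp
  then have "strict_mono_on {..n} (fst \<circ> P)"
    by (intro strict_mono_onI) (auto intro: lift_Suc_mono_less_ivl[of "{..<n}"])
  then show ?thesis
    by (rule inj_on_imageI2[OF strict_mono_on_imp_inj_on])
qed

lemma extend_chain_rises:
  assumes "k \<in> {-1..int n + 1}"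
  shows "snd (extend_chain n P (k + 1)) = fst (extend_chain n P k) + snd (P 0)"
proof -
  have "k = -1 \<or> k = 0 \<or> k = int n + 1 \<or> k \<in> {1..int n}"
    using assms by auto
  then consider "k = -1" | "k = 0" | "k = int n + 1" | "k \<in> {1..int n}"
    by blast
  then show ?thesis
  proof cases
    case 1
    then show ?thesis using closes by (simp add: extend_chain_def)
  next
    case 2
    then show ?thesis by (simp add: extend_chain_def)
  next
    case 3
    then show ?thesis using closes by (simp add: extend_chain_def)
  next
    case 4
    then have "extend_chain n P (k + 1) = P (nat k)" and "extend_chain n P k = P (nat k - 1)"
      by (simp_all add: extend_chain_inner nat_diff_distrib')
    moreover have "nat k \<in> {1..n}"
      using 4 by auto
    ultimately show ?thesis
      using steps_untruncated by simp
  qed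
qed

lemma extend_chain_steps:
  assumes "i \<in> {0..int n + 1}"
  shows "snd (extend_chain n P (i + 1) - extend_chain n P i) = fst (extend_chain n P i - extend_chain n P (i - 1))"
  using extend_chain_rises[of i] extend_chain_rises[of "i - 1"] assms by simp

end

theorem proposition3:
  fixes \<gamma> :: "real \<Rightarrow> real \<times> real" and n :: nat
  assumes "continuous_on {0..1} \<gamma>"
    and "\<gamma> ` {0..1} \<subseteq> {0..1} \<times> {0..1}"
    and "\<gamma> 0 = (0, 0)" and "\<gamma> 1 = (1, 1)"
    and "\<forall>t\<in>{0<..<1}. \<gamma> t \<in> Delta"
  shows "\<exists>A :: int \<Rightarrow> real \<times> real.
           (\<forall>i\<in>{1..int n + 1}. A i \<in> \<gamma> ` {0..1})
         \<and> inj_on A {1..int n + 1}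
         \<and> A 0 = (0, 0) \<and> A (int n + 2) = (1, 1)
         \<and> A (-1) = A (int n + 1) - (1, 1)
         \<and> (\<forall>i\<in>{0..int n + 1}. snd (A (i + 1) - A i) = fst (A i - A (i - 1)))"
proof -
  obtain u where u: "u \<in> unit_cube (Suc n)"
    and closes: "fst (\<gamma> (u n)) + snd (\<gamma> (u 0)) = 1"
    and steps: "\<forall>i\<in>{1..n}. snd (\<gamma> (u i)) = min 1 (fst (\<gamma> (u (i - 1))) + snd (\<gamma> (u 0)))"
    using staircase_system_solvable[OF assms(1,2)] assms(3,4) by auto
  have u_range: "u j \<in> {0..1}" if "j \<le> n" for j
    using u that by (simp add: unit_cube_def PiE_iff)
  interpret truncated_staircase n "\<gamma> \<circ> u"
  proof
    fix j
    assume "j \<le> n"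
    then consider "u j = 0" | "u j = 1" | "u j \<in> {0<..<1}"
      using u_range by fastforce
    then show "(\<gamma> \<circ> u) j \<in> insert (0, 0) (insert (1, 1) Delta)"
      using assms(3-5) by cases auto
  qed (use closes steps in auto)
  show ?thesis
  proof (intro exI[of _ "extend_chain n (\<gamma> \<circ> u)"] conjI ballI inj_on_extend_chain inj_on_points)
    fix i
    assume "i \<in> {1..int n + 1}"
    then show "extend_chain n (\<gamma> \<circ> u) i \<in> \<gamma> ` {0..1}"
      using u_range[of "nat (i - 1)"] by (auto simp: extend_chain_inner)
  next
    fix i
    assume "i \<in> {0..int n + 1}"
    then show "snd (extend_chain n (\<gamma> \<circ> u) (i + 1) - extend_chain n (\<gamma> \<circ> u) i)
        = fst (extend_chain n (\<gamma> \<circ> u) i - extend_chain n (\<gamma> \<circ> u) (i - 1))"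
      by (rule extend_chain_steps)
  qed (simp_all add: extend_chain_def)
qed

end
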